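(* For every $n\in\mathbb{N}$, $F(\mathbb{A}^{(n)})\cong\mathbb{A}^n$, and $F(\mathbb{A}^{( * )})\cong\mathbb{A}^*$, as nominal $\mathrm{Sb}$-sets.
   Context: $\mathbb{A}$ is a countably infinite set of atoms; $\mathrm{Sb}$ is the monoid of functions $\mathbb{A}\to\mathbb{A}$ that are the identity outside a finite set, $\mathrm{Perm}$ its bijections. $\mathbb{A}$ is a nominal $\mathrm{Sb}$-set (and $\mathrm{Perm}$-set) via $m\cdot a=m(a)$. $\mathbb{A}^{(n)}$ is the nominal $\mathrm{Perm}$-set of words of length $n$ with pairwise distinct letters, $\mathbb{A}^{( * )}=\coprod_n\mathbb{A}^{(n)}$; $\mathbb{A}^n$ and $\mathbb{A}^*=\coprod_n\mathbb{A}^n$ carry the pointwise $\mathrm{Sb}$-action. For a nominal $\mathrm{Perm}$-set $X$ (every element $x$ has a finite set $C$ with $g|_C=g'|_C\Rightarrow gx=g'x$), $F(X)=(\mathrm{Sb}\times X)/{\sim}$, where $\sim$ is the least equivalence containing $(m,gx)\sim(mg,x)$ for $g\in\mathrm{Perm}$ and $(m,x)\sim(m',x)$ whenever $m|_C=m'|_C$ for such a support $C$ of $x$; the $\mathrm{Sb}$-action is $n\cdot[m,x]=[nm,x]$. *)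

theory Defs
  imports Main "HOL-Library.Countable"
begin

definition Sb :: "('a \<Rightarrow> 'a) set" where
  "Sb = {m. finite {a. m a \<noteq> a}}"

definition Perm :: "('a \<Rightarrow> 'a) set" where
  "Perm = {g \<in> Sb. bij g}"

definition supports :: "(('a \<Rightarrow> 'a) \<Rightarrow> 'x \<Rightarrow> 'x) \<Rightarrow> 'a set \<Rightarrow> 'x \<Rightarrow> bool" where
  "supports act C x \<longleftrightarrow> finite C \<and>
     (\<forall>g\<in>Perm. \<forall>g'\<in>Perm. (\<forall>a\<in>C. g a = g' a) \<longrightarrow> act g x = act g' x)"

definition F_gen :: "'x set \<Rightarrow> (('a \<Rightarrow> 'a) \<Rightarrow> 'x \<Rightarrow> 'x)
    \<Rightarrow> ((('a \<Rightarrow> 'a) \<times> 'x) \<times> (('a \<Rightarrow> 'a) \<times> 'x)) set" where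
  "F_gen X act =
     {((m, act g x), (m \<circ> g, x)) | m g x. m \<in> Sb \<and> g \<in> Perm \<and> x \<in> X}
   \<union> {((m, x), (m', x)) | m m' x C. m \<in> Sb \<and> m' \<in> Sb \<and> x \<in> X \<and>
        supports act C x \<and> (\<forall>a\<in>C. m a = m' a)}"

definition F_rel :: "'x set \<Rightarrow> (('a \<Rightarrow> 'a) \<Rightarrow> 'x \<Rightarrow> 'x)
    \<Rightarrow> ((('a \<Rightarrow> 'a) \<times> 'x) \<times> (('a \<Rightarrow> 'a) \<times> 'x)) set" where
  "F_rel X act = Id_on (Sb \<times> X) \<union> (F_gen X act \<union> (F_gen X act)\<inverse>)\<^sup>+"

definition F_carrier :: "'x set \<Rightarrow> (('a \<Rightarrow> 'a) \<Rightarrow> 'x \<Rightarrow> 'x)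
    \<Rightarrow> (('a \<Rightarrow> 'a) \<times> 'x) set set" where
  "F_carrier X act = (Sb \<times> X) // F_rel X act"

definition F_act :: "'x set \<Rightarrow> (('a \<Rightarrow> 'a) \<Rightarrow> 'x \<Rightarrow> 'x)
    \<Rightarrow> ('a \<Rightarrow> 'a) \<Rightarrow> (('a \<Rightarrow> 'a) \<times> 'x) set \<Rightarrow> (('a \<Rightarrow> 'a) \<times> 'x) set" where
  "F_act X act n c = (\<Union>p\<in>c. F_rel X act `` {(n \<circ> fst p, snd p)})"

definition sb_iso :: "'x set \<Rightarrow> (('a \<Rightarrow> 'a) \<Rightarrow> 'x \<Rightarrow> 'x)
    \<Rightarrow> 'y set \<Rightarrow> (('a \<Rightarrow> 'a) \<Rightarrow> 'y \<Rightarrow> 'y) \<Rightarrow> bool" where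
  "sb_iso X actX Y actY \<longleftrightarrow>
     (\<exists>f. bij_betw f X Y \<and> (\<forall>m\<in>Sb. \<forall>x\<in>X. f (actX m x) = actY m (f x)))"

definition A_dist :: "nat \<Rightarrow> 'a list set" where
  "A_dist n = {w. length w = n \<and> distinct w}"

definition A_dist_star :: "'a list set" where
  "A_dist_star = {w. distinct w}"

definition A_pow :: "nat \<Rightarrow> 'a list set" where
  "A_pow n = {w. length w = n}"

definition A_star :: "'a list set" where
  "A_star = UNIV"

definition word_act :: "('a \<Rightarrow> 'a) \<Rightarrow> 'a list \<Rightarrow> 'a list" where
  "word_act m w = map m w"

end

theory Submission
  imports Defs "HOL-Combinatorics.Transposition"
begin

(* The isomorphism sends the class of (m, w) to map m w. This is well defined since both kinds
  of generating pairs of \<sim> preserve map m w: every support C of a word contains its letters,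
  as a letter outside C could be swapped with a fresh atom, fixing C pointwise but changing the
  word.
  It is injective since two words with distinct letters and equal length differ by a finite
  permutation g, whence (m, w) \<sim> (m' \<circ> g, w) \<sim> (m', map g w) whenever
  map m w = map m' (map g w); onto since a word with distinct letters can be sent to any word
  of the same length by a finitely supported map; and equivariant since \<sim> is a congruence
  for composition on the left. *)

lemma id_in_Sb: "id \<in> Sb"
  by (simp add: Sb_def)

lemma Sb_comp: "m \<in> Sb \<Longrightarrow> m' \<in> Sb \<Longrightarrow> m \<circ> m' \<in> Sb"
  unfolding Sb_def mem_Collect_eq
  by (rule finite_subset[of _ "{a. m' a \<noteq> a} \<union> {a. m a \<noteq> a}"]) auto

lemma Sb_fun_upd: "m \<in> Sb \<Longrightarrow> m(a := b) \<in> Sb"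
  unfolding Sb_def mem_Collect_eq by (rule finite_subset[of _ "insert a {c. m c \<noteq> c}"]) auto

lemma id_in_Perm: "id \<in> Perm"
  by (simp add: Perm_def id_in_Sb)

lemma Perm_comp: "g \<in> Perm \<Longrightarrow> g' \<in> Perm \<Longrightarrow> g \<circ> g' \<in> Perm"
  unfolding Perm_def by (auto simp: Sb_comp bij_comp)

lemma transpose_in_Perm: "transpose a b \<in> Perm"
proof -
  have "{c. transpose a b c \<noteq> c} \<subseteq> {a, b}"
    by (auto simp: transpose_def)
  then show ?thesis
    unfolding Perm_def Sb_def by (auto intro: finite_subset)
qed

lemma distinct_map_Perm: "g \<in> Perm \<Longrightarrow> distinct w \<Longrightarrow> distinct (map g w)"
  unfolding Perm_def by (simp add: distinct_map bij_def inj_on_def)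

lemma trancl_map_closed:
  assumes "\<And>x y. (x, y) \<in> r \<Longrightarrow> (f x, f y) \<in> r"
    and "(x, y) \<in> r\<^sup>+"
  shows "(f x, f y) \<in> r\<^sup>+"
proof -
  have "r \<subseteq> inv_image (r\<^sup>+) f"
  proof clarify
    fix a b
    assume "(a, b) \<in> r"
    then show "(a, b) \<in> inv_image (r\<^sup>+) f"
      by (simp add: assms(1) r_into_trancl')
  qed
  then have "r\<^sup>+ \<subseteq> (inv_image (r\<^sup>+) f)\<^sup>+"
    by (rule trancl_mono_subset)
  also have "\<dots> = inv_image (r\<^sup>+) f"
    by (simp add: trans_inv_image)
  finally show ?thesis
    using assms(2) by auto
qed

lemma Restr_kernel_Image:
  "p \<in> A \<Longrightarrow> Restr (kernel h) A `` {p} = A \<inter> h -` {h p}"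
  by (auto simp: kernel_def)

lemma the_elem_image_Restr_kernel_class:
  "p \<in> A \<Longrightarrow> the_elem (h ` (Restr (kernel h) A `` {p})) = h p"
proof -
  assume "p \<in> A"
  then have "h ` (Restr (kernel h) A `` {p}) = {h p}"
    by (auto simp: Restr_kernel_Image)
  then show ?thesis by simp
qed

lemma bij_betw_quotient_Restr_kernel:
  "bij_betw (\<lambda>c. the_elem (h ` c)) (A // (Restr (kernel h) A)) (h ` A)"
proof (rule bij_betw_imageI)
  show "inj_on (\<lambda>c. the_elem (h ` c)) (A // (Restr (kernel h) A))"
  proof (rule inj_onI)
    fix c c'
    assume "c \<in> A // (Restr (kernel h) A)" "c' \<in> A // (Restr (kernel h) A)"
      and eq: "the_elem (h ` c) = the_elem (h ` c')"
    then obtain p p' where p: "p \<in> A" "c = Restr (kernel h) A `` {p}"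
      and p': "p' \<in> A" "c' = Restr (kernel h) A `` {p'}"
      by (auto elim!: quotientE)
    with eq have "h p = h p'"
      by (simp only: the_elem_image_Restr_kernel_class)
    with p p' show "c = c'"
      by (simp add: Restr_kernel_Image)
  qed
  have "A // (Restr (kernel h) A) = (\<lambda>p. Restr (kernel h) A `` {p}) ` A"
    unfolding quotient_def by blast
  then show "(\<lambda>c. the_elem (h ` c)) ` (A // (Restr (kernel h) A)) = h ` A"
    by (simp add: image_image the_elem_image_Restr_kernel_class cong: image_cong)
qed

lemma F_gen_PermI:
  "m \<in> Sb \<Longrightarrow> g \<in> Perm \<Longrightarrow> x \<in> X \<Longrightarrow> ((m, act g x), (m \<circ> g, x)) \<in> F_gen X act"
  unfolding F_gen_def by blast

lemma F_gen_supportsI: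
  "m \<in> Sb \<Longrightarrow> m' \<in> Sb \<Longrightarrow> x \<in> X \<Longrightarrow> supports act C x \<Longrightarrow> \<forall>a\<in>C. m a = m' a
    \<Longrightarrow> ((m, x), (m', x)) \<in> F_gen X act"
  unfolding F_gen_def by blast

lemma F_genE:
  assumes "(p, q) \<in> F_gen X act"
  obtains (Perm) m g x where "p = (m, act g x)" "q = (m \<circ> g, x)" "m \<in> Sb" "g \<in> Perm" "x \<in> X"
  | (supports) m m' x C where "p = (m, x)" "q = (m', x)" "m \<in> Sb" "m' \<in> Sb" "x \<in> X"
      "supports act C x" "\<forall>a\<in>C. m a = m' a"
  using assms unfolding F_gen_def by (elim UnE CollectE exE conjE) simp_all

lemma F_gen_subset:
  assumes "\<And>g x. g \<in> Perm \<Longrightarrow> x \<in> X \<Longrightarrow> act g x \<in> X"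
  shows "F_gen X act \<subseteq> (Sb \<times> X) \<times> (Sb \<times> X)"
proof (rule subrelI)
  fix p q
  assume "(p, q) \<in> F_gen X act"
  then show "(p, q) \<in> (Sb \<times> X) \<times> (Sb \<times> X)"
  proof (cases rule: F_genE)
    case (Perm m g x)
    then show ?thesis
      using assms[of g x] by (auto simp: Perm_def Sb_comp)
  qed simp
qed

lemma equiv_F_rel:
  assumes "\<And>g x. g \<in> Perm \<Longrightarrow> x \<in> X \<Longrightarrow> act g x \<in> X"
  shows "equiv (Sb \<times> X) (F_rel X act)"
proof -
  let ?S = "F_gen X act \<union> (F_gen X act)\<inverse>"
  have "?S\<^sup>+ \<subseteq> (Sb \<times> X) \<times> (Sb \<times> X)"
    using F_gen_subset[of X act, OF assms] by (intro trancl_subset_Sigma) auto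
  moreover have "sym (?S\<^sup>+)"
    by (intro sym_trancl sym_Un_converse)
  ultimately show ?thesis
    unfolding F_rel_def equiv_def refl_on_def sym_def trans_def
    by (auto intro: trancl_trans)
qed

lemma F_rel_comp_left:
  assumes "(p, q) \<in> F_rel X act" and "n \<in> Sb"
  shows "((n \<circ> fst p, snd p), (n \<circ> fst q, snd q)) \<in> F_rel X act"
proof -
  let ?f = "\<lambda>p. (n \<circ> fst p, snd p)"
  let ?S = "F_gen X act \<union> (F_gen X act)\<inverse>"
  have "(?f p, ?f q) \<in> F_gen X act" if "(p, q) \<in> F_gen X act" for p q
    using that
  proof (cases rule: F_genE)
    case (Perm m g x)
    then show ?thesis
      using F_gen_PermI[OF Sb_comp[OF \<open>n \<in> Sb\<close>]] by (simp add: comp_assoc)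
  next
    case (supports m m' x C)
    then show ?thesis
      using \<open>n \<in> Sb\<close> by (auto intro: F_gen_supportsI Sb_comp)
  qed
  then have "(?f p, ?f q) \<in> ?S" if "(p, q) \<in> ?S" for p q
    using that by blast
  then have "(?f p, ?f q) \<in> ?S\<^sup>+" if "(p, q) \<in> ?S\<^sup>+" for p q
    using that by (rule trancl_map_closed)
  moreover have "?f p \<in> Sb \<times> X" if "p \<in> Sb \<times> X" for p
    using that \<open>n \<in> Sb\<close> Sb_comp by auto
  ultimately show ?thesis
    using assms(1) unfolding F_rel_def by blast
qed

lemma F_act_class:
  assumes "equiv (Sb \<times> X) (F_rel X act)" and "n \<in> Sb" and "p \<in> Sb \<times> X"
  shows "F_act X act n (F_rel X act `` {p}) = F_rel X act `` {(n \<circ> fst p, snd p)}"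
proof -
  let ?R = "F_rel X act"
  have "?R `` {(n \<circ> fst q, snd q)} = ?R `` {(n \<circ> fst p, snd p)}" if "q \<in> ?R `` {p}" for q
    using that F_rel_comp_left[OF _ \<open>n \<in> Sb\<close>] equiv_class_eq[OF assms(1)] by blast
  moreover have "p \<in> ?R `` {p}"
    using assms(1,3) by (rule equiv_class_self)
  ultimately show ?thesis
    unfolding F_act_def by blast
qed

lemma supportsD:
  "supports act C x \<Longrightarrow> g \<in> Perm \<Longrightarrow> g' \<in> Perm \<Longrightarrow> \<forall>a\<in>C. g a = g' a \<Longrightarrow> act g x = act g' x"
  unfolding supports_def by (elim conjE) (drule bspec, assumption, drule bspec, assumption, erule mp)

lemma F_rel_subset_kernel:
  assumes "F_gen X act \<subseteq> kernel h"
  shows "F_rel X act \<subseteq> kernel h"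
proof -
  have "(F_gen X act \<union> (F_gen X act)\<inverse>)\<^sup>+ \<subseteq> (kernel h)\<^sup>+"
    using assms by (intro trancl_mono_subset) (auto simp: kernel_def)
  also have "\<dots> = kernel h"
    using equiv_kernel[of h] by (simp add: equiv_def)
  finally show ?thesis
    unfolding F_rel_def by (auto simp: kernel_def)
qed

lemma supports_word_act_imp_set_subset:
  assumes "infinite (UNIV :: 'a set)" and "supports word_act C (w :: 'a list)"
  shows "set w \<subseteq> C"
proof
  fix a
  assume "a \<in> set w"
  show "a \<in> C"
  proof (rule ccontr)
    assume "a \<notin> C"
    have "finite (C \<union> set w)"
      using assms(2) by (simp add: supports_def)
    then obtain b where b: "b \<notin> C \<union> set w"
      using assms(1) ex_new_if_finite by blast
    have "\<forall>c\<in>C. transpose a b c = id c"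
      using \<open>a \<notin> C\<close> b by (auto simp: transpose_def)
    then have "word_act (transpose a b) w = word_act id w"
      using supportsD[OF assms(2) transpose_in_Perm id_in_Perm] by blast
    then have "map (transpose a b) w = w"
      by (simp add: word_act_def)
    then have "b \<in> set w"
      using \<open>a \<in> set w\<close> by (metis list.set_map image_eqI transpose_apply_first)
    with b show False
      by simp
  qed
qed

lemma supports_word_act_set: "supports word_act (set w) w"
  unfolding supports_def word_act_def by auto

lemma ex_Perm_map_eq:
  "distinct w \<Longrightarrow> distinct w' \<Longrightarrow> length w = length w' \<Longrightarrow> \<exists>g\<in>Perm. map g w = w'"
proof (induction w arbitrary: w')
  case Nil
  then show ?case
    using id_in_Perm by auto
next
  case (Cons x w)
  then obtain y v where w': "w' = y # v"
    by (cases w') auto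
  with Cons obtain g where g: "g \<in> Perm" "map g w = v"
    by auto
  let ?h = "transpose (g x) y \<circ> g"
  have agree: "?h a = g a" if "a \<in> set w" for a
  proof -
    have "inj g"
      using g(1) by (simp add: Perm_def bij_is_inj)
    then have "g a \<noteq> g x"
      using that Cons.prems(1) by (auto simp: inj_eq)
    moreover have "g a \<noteq> y"
      using that g(2) Cons.prems(2) w' by auto
    ultimately show ?thesis
      by simp
  qed
  then have "map ?h w = map g w"
    by (rule map_cong[OF refl])
  with g(2) w' have "map ?h (x # w) = w'"
    by simp
  moreover have "?h \<in> Perm"
    by (rule Perm_comp[OF transpose_in_Perm g(1)])
  ultimately show ?case
    by blast
qed

lemma ex_Sb_map_eq:
  "distinct w \<Longrightarrow> length w = length v \<Longrightarrow> \<exists>m\<in>Sb. map m w = v"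
proof (induction w arbitrary: v)
  case Nil
  then show ?case
    using id_in_Sb by auto
next
  case (Cons x w)
  then obtain y v' where v: "v = y # v'"
    by (cases v) auto
  with Cons obtain m where m: "m \<in> Sb" "map m w = v'"
    by auto
  have "map (m(x := y)) w = map m w"
    using Cons.prems(1) by (intro map_cong) auto
  with m v have "map (m(x := y)) (x # w) = v"
    by simp
  moreover have "m(x := y) \<in> Sb"
    using m(1) by (rule Sb_fun_upd)
  ultimately show ?case
    by (rule bexI)
qed

definition eval_word :: "('a \<Rightarrow> 'a) \<times> 'a list \<Rightarrow> 'a list" where
  "eval_word p = map (fst p) (snd p)"

lemma F_gen_word_act_subset_kernel:
  assumes "infinite (UNIV :: 'a set)"
  shows "F_gen X word_act \<subseteq> kernel (eval_word :: ('a \<Rightarrow> 'a) \<times> 'a list \<Rightarrow> 'a list)"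
proof (rule subrelI)
  fix p q :: "('a \<Rightarrow> 'a) \<times> 'a list"
  assume "(p, q) \<in> F_gen X word_act"
  then show "(p, q) \<in> kernel eval_word"
  proof (cases rule: F_genE)
    case Perm
    then show ?thesis
      by (simp add: kernel_def eval_word_def word_act_def)
  next
    case (supports m m' w C)
    then have "set w \<subseteq> C"
      using supports_word_act_imp_set_subset[OF assms] by blast
    with supports show ?thesis
      by (auto simp: kernel_def eval_word_def)
  qed
qed

lemma F_rel_word_actI:
  assumes distinct: "\<And>w. w \<in> X \<Longrightarrow> distinct w"
    and p: "p \<in> Sb \<times> X" and q: "q \<in> Sb \<times> X"
    and eval_eq: "eval_word p = eval_word q"
  shows "(p, q) \<in> F_rel X word_act"
proof -
  obtain m w m' w' where pq: "p = (m, w)" "q = (m', w')"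
    by fastforce
  with eval_eq have "length w = length w'"
    by (metis eval_word_def fst_conv snd_conv length_map)
  then obtain g where g: "g \<in> Perm" "map g w = w'"
    using ex_Perm_map_eq distinct p q pq by blast
  let ?mid = "(m' \<circ> g, w)"
  have "(q, ?mid) \<in> F_gen X word_act"
    using F_gen_PermI[of m' g w X word_act] g p q pq by (simp add: word_act_def)
  moreover have "(p, ?mid) \<in> F_gen X word_act"
  proof -
    have "map m w = map (m' \<circ> g) w"
      using eval_eq pq by (simp add: eval_word_def flip: g(2))
    then have "\<forall>a\<in>set w. m a = (m' \<circ> g) a"
      by (simp add: map_eq_conv)
    moreover have "m' \<circ> g \<in> Sb"
      using g(1) q pq by (auto simp: Perm_def Sb_comp)
    ultimately show ?thesis
      using F_gen_supportsI[OF _ _ _ supports_word_act_set] p pq by blast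
  qed
  ultimately have "(p, q) \<in> (F_gen X word_act \<union> (F_gen X word_act)\<inverse>)\<^sup>+"
    by (blast intro: trancl_into_trancl r_into_trancl)
  then show ?thesis
    unfolding F_rel_def by blast
qed

lemma F_rel_word_act_eq:
  fixes X :: "'a list set"
  assumes "infinite (UNIV :: 'a set)"
    and distinct: "\<And>w. w \<in> X \<Longrightarrow> distinct w"
    and closed: "\<And>g w. g \<in> Perm \<Longrightarrow> w \<in> X \<Longrightarrow> map g w \<in> X"
  shows "F_rel X word_act = Restr (kernel eval_word) (Sb \<times> X)"
proof
  have "F_rel X word_act \<subseteq> kernel eval_word"
    by (rule F_rel_subset_kernel[OF F_gen_word_act_subset_kernel[OF assms(1)]])
  moreover have "F_rel X word_act \<subseteq> (Sb \<times> X) \<times> (Sb \<times> X)"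
    using equiv_F_rel[of X word_act] closed by (simp add: word_act_def equiv_type)
  ultimately show "F_rel X word_act \<subseteq> Restr (kernel eval_word) (Sb \<times> X)"
    by blast
  show "Restr (kernel eval_word) (Sb \<times> X) \<subseteq> F_rel X word_act"
    by (auto simp: kernel_def intro: F_rel_word_actI distinct)
qed

lemma sb_iso_F_word_act:
  fixes X :: "'a list set"
  assumes "infinite (UNIV :: 'a set)"
    and distinct: "\<And>w. w \<in> X \<Longrightarrow> distinct w"
    and closed: "\<And>g w. g \<in> Perm \<Longrightarrow> w \<in> X \<Longrightarrow> map g w \<in> X"
  shows "sb_iso (F_carrier X word_act) (F_act X word_act) (eval_word ` (Sb \<times> X)) word_act"
proof -
  let ?R = "F_rel X word_act"
  have R: "?R = Restr (kernel eval_word) (Sb \<times> X)"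
    using assms by (rule F_rel_word_act_eq)
  have equiv: "equiv (Sb \<times> X) ?R"
    using equiv_F_rel[of X word_act] closed by (simp add: word_act_def)
  define f :: "(('a \<Rightarrow> 'a) \<times> 'a list) set \<Rightarrow> 'a list"
    where "f c = the_elem (eval_word ` c)" for c
  have "bij_betw f (F_carrier X word_act) (eval_word ` (Sb \<times> X))"
    unfolding f_def F_carrier_def R by (rule bij_betw_quotient_Restr_kernel)
  moreover have "f (F_act X word_act m c) = word_act m (f c)"
    if m: "m \<in> Sb" and c: "c \<in> F_carrier X word_act" for m c
  proof -
    obtain p where p: "p \<in> Sb \<times> X" "c = ?R `` {p}"
      using c unfolding F_carrier_def by (blast elim: quotientE)
    then have "F_act X word_act m c = ?R `` {(m \<circ> fst p, snd p)}"
      using F_act_class[OF equiv m] by simp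
    moreover have "(m \<circ> fst p, snd p) \<in> Sb \<times> X"
      using p(1) m Sb_comp by auto
    ultimately have "f (F_act X word_act m c) = eval_word (m \<circ> fst p, snd p)"
      unfolding f_def R by (simp add: the_elem_image_Restr_kernel_class)
    also have "\<dots> = word_act m (eval_word p)"
      by (simp add: eval_word_def word_act_def)
    also have "eval_word p = f c"
      using p unfolding f_def R by (simp add: the_elem_image_Restr_kernel_class)
    finally show ?thesis .
  qed
  ultimately show ?thesis
    unfolding sb_iso_def by blast
qed

lemma eval_word_image:
  fixes X :: "'a list set"
  assumes "\<And>w. w \<in> X \<Longrightarrow> distinct w"
  shows "eval_word ` (Sb \<times> X) = {v. \<exists>w\<in>X. length w = length v}"
proof
  show "eval_word ` (Sb \<times> X) \<subseteq> {v. \<exists>w\<in>X. length w = length v}"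
    by (auto simp: eval_word_def)
  show "{v. \<exists>w\<in>X. length w = length v} \<subseteq> eval_word ` (Sb \<times> X)"
  proof clarify
    fix v w :: "'a list"
    assume "w \<in> X" "length w = length v"
    then obtain m where "m \<in> Sb" "map m w = v"
      using ex_Sb_map_eq assms by blast
    with \<open>w \<in> X\<close> show "v \<in> eval_word ` (Sb \<times> X)"
      by (force simp: eval_word_def)
  qed
qed

lemma infinite_imp_ex_distinct_length:
  assumes "infinite (UNIV :: 'a set)"
  shows "\<exists>w :: 'a list. distinct w \<and> length w = n"
proof -
  obtain A :: "'a set" where "finite A" "card A = n"
    using infinite_arbitrarily_large[OF assms] by blast
  then show ?thesis
    using finite_distinct_list distinct_card by metis
qed

theorem mainTheorem8:
  assumes "infinite (UNIV :: ('a::countable) set)"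
  shows "(\<forall>n::nat. sb_iso (F_carrier (A_dist n :: 'a list set) word_act) (F_act (A_dist n) word_act)
                       (A_pow n) word_act)
       \<and> sb_iso (F_carrier (A_dist_star :: 'a list set) word_act) (F_act A_dist_star word_act)
                 A_star word_act"
proof (intro conjI allI)
  fix n
  have "eval_word ` (Sb \<times> A_dist n) = (A_pow n :: 'a list set)"
    using infinite_imp_ex_distinct_length[OF assms, of n]
    by (subst eval_word_image) (auto simp: A_dist_def A_pow_def)
  then show "sb_iso (F_carrier (A_dist n :: 'a list set) word_act) (F_act (A_dist n) word_act)
                       (A_pow n) word_act"
    using sb_iso_F_word_act[OF assms, of "A_dist n"] by (simp add: A_dist_def distinct_map_Perm)
next
  have "eval_word ` (Sb \<times> A_dist_star) = (A_star :: 'a list set)"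
    using infinite_imp_ex_distinct_length[OF assms]
    by (subst eval_word_image) (auto simp: A_dist_star_def A_star_def)
  then show "sb_iso (F_carrier (A_dist_star :: 'a list set) word_act) (F_act A_dist_star word_act)
                 A_star word_act"
    using sb_iso_F_word_act[OF assms, of A_dist_star] by (simp add: A_dist_star_def distinct_map_Perm)
qed

end
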